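(* Let $\mathcal{S}$ be a normal SPN over Boolean variables $X_1,\ldots,X_N$ and let $\mathcal{B}$ be the Bayesian network with ADD CPDs constructed from $\mathcal{S}$ as described in the context. Then $\Pr_{\mathcal{S}}(\mathbf{x})=\Pr_{\mathcal{B}}(\mathbf{x})$ for all assignments $\mathbf{x}$ of $X_1,\ldots,X_N$, where $\Pr_{\mathcal{B}}(\mathbf{x})=\sum_{\mathbf{h}}\Pr_{\mathcal{B}}(\mathbf{x},\mathbf{h})$ is the marginal over the observable variables, the sum ranging over joint assignments $\mathbf{h}$ of all hidden variables and $\Pr_{\mathcal{B}}(\mathbf{x},\mathbf{h})$ being the product of the CPDs of all variables of $\mathcal{B}$.
   Context: SPNs. Let $X_1,\ldots,X_N$ be Boolean variables. An SPN is a finite rooted DAG whose internal nodes are sum and product nodes, each edge $(v,u)$ out of a sum node carrying a weight $w_{v,u}\ge 0$, and whose terminal nodes are indicators $\mathbb{I}_{x_n},\mathbb{I}_{\bar x_n}$ or univariate distribution nodes over some $X_n$ with parameter $p\in[0,1]$ (value $p\mathbb{I}_{x_n}+(1-p)\mathbb{I}_{\bar x_n}$, where for an assignment $\mathbf{x}$, $\mathbb{I}_{x_n}=1$ iff $X_n$ is true and $\mathbb{I}_{\bar x_n}=1-\mathbb{I}_{x_n}$); products multiply their children's values, sum nodes take $\sum_u w_{v,u}\mathrm{val}(u)$, $f_{\mathcal{S}}(\mathbf{x})$ is the root value and $\Pr_{\mathcal{S}}(\mathbf{x})=f_{\mathcal{S}}(\mathbf{x})/\sum_{\mathbf{x}'}f_{\mathcal{S}}(\mathbf{x}')$.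 The scope of a terminal node over $X_n$ is $\{X_n\}$; an internal node's scope is the union of its children's scopes. The SPN is over $X_1,\ldots,X_N$ if the root's scope is $\{X_1,\ldots,X_N\}$. It is normal if (1) it is complete (children of each sum node have equal scopes) and decomposable (children of each product node have pairwise disjoint scopes); (2) the weights leaving each sum node are nonnegative and sum to 1; (3) every terminal node is a univariate distribution node and every sum node has scope size at least 2. Construction. From a normal SPN $\mathcal{S}$ over $X_1,\ldots,X_N$ build a Bayesian network $\mathcal{B}$: its variables are the observable variables $X_1,\ldots,X_N$ and, for each sum node $v$ with children $u_1,\ldots,u_l$, a hidden variable $H_v$ with values $\{1,\ldots,l\}$; its edges are exactly $H_v\to X$ for each sum node $v$ and each $X\in\mathrm{scope}(v)$. The CPD of $H_v$ is the decision stump $\mathcal{A}_{H_v}$: $\Pr(H_v=i)=w_{v,u_i}$. The CPD of $X$ is the ADD $\mathcal{A}_X$ obtained by taking the subgraph of $\mathcal{S}$ induced by the nodes whose scope contains $X$ (in which each product node has exactly one child), contracting every product node (connecting each of its parents to its unique child and deleting it; if it is the root, its child becomes the root), turning each sum node $v$ into an ADD node labelled $H_v$ whose $i$-th out-edge goes to the image of its $i$-th child $u_i$, and keeping each terminal node (a univariate distribution over $X$) as an ADD terminal carrying that distribution; $\Pr(X=x\mid \mathrm{Pa}(X)=\mathbf{h})$ is the probability of $x$ under the distribution at the terminal reached by following $\mathcal{A}_X$ from its root according to $\mathbf{h}$. *)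

theory Defs
  imports Complex_Main "HOL-Library.FuncSet"
begin

text \<open>Observable variables are X_1..X_N, identified with the naturals 1..N.
  A terminal node is either an indicator (Ind n True = I_{x_n}, Ind n False = I_{not x_n})
  or a univariate distribution node Dist n p over X_n.\<close>

datatype spn_kind = SumNode | ProdNode | Ind nat bool | Dist nat real

record 'v spn =
  spn_nodes :: "'v set"
  spn_root  :: 'v
  spn_kind  :: "'v \<Rightarrow> spn_kind"
  spn_ch    :: "'v \<Rightarrow> 'v list"        \<comment> \<open>ordered children u_1..u_l\<close>
  spn_w     :: "'v \<Rightarrow> 'v \<Rightarrow> real"

definition spn_edges :: "'v spn \<Rightarrow> ('v \<times> 'v) set" where
  "spn_edges S = {(v,u). v \<in> spn_nodes S \<and> u \<in> set (spn_ch S v)}"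

definition is_terminal :: "spn_kind \<Rightarrow> bool" where
  "is_terminal k \<longleftrightarrow> k \<noteq> SumNode \<and> k \<noteq> ProdNode"

definition sum_nodes :: "'v spn \<Rightarrow> 'v set" where
  "sum_nodes S = {v \<in> spn_nodes S. spn_kind S v = SumNode}"

definition spn_wf :: "'v spn \<Rightarrow> bool" where
  "spn_wf S \<longleftrightarrow> finite (spn_nodes S) \<and> spn_root S \<in> spn_nodes S
     \<and> (\<forall>v\<in>spn_nodes S. set (spn_ch S v) \<subseteq> spn_nodes S \<and> distinct (spn_ch S v))
     \<and> (\<forall>v\<in>spn_nodes S. is_terminal (spn_kind S v) \<longleftrightarrow> spn_ch S v = [])
     \<and> acyclic (spn_edges S)
     \<and> (\<forall>v\<in>spn_nodes S. (spn_root S, v) \<in> (spn_edges S)\<^sup>*)"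

text \<open>Recursion over the DAG is done with fuel; fuel = number of nodes exceeds the height.\<close>

fun scope_f :: "'v spn \<Rightarrow> nat \<Rightarrow> 'v \<Rightarrow> nat set" where
  "scope_f S 0 v = {}"
| "scope_f S (Suc k) v = (case spn_kind S v of
      Ind n b \<Rightarrow> {n}
    | Dist n p \<Rightarrow> {n}
    | _ \<Rightarrow> (\<Union>u\<in>set (spn_ch S v). scope_f S k u))"

definition scope :: "'v spn \<Rightarrow> 'v \<Rightarrow> nat set" where
  "scope S v = scope_f S (card (spn_nodes S)) v"

fun val_f :: "'v spn \<Rightarrow> (nat \<Rightarrow> bool) \<Rightarrow> nat \<Rightarrow> 'v \<Rightarrow> real" where
  "val_f S x 0 v = 0"
| "val_f S x (Suc k) v = (case spn_kind S v of
      Ind n b \<Rightarrow> (if x n = b then 1 else 0)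
    | Dist n p \<Rightarrow> p * (if x n then 1 else 0) + (1 - p) * (if x n then 0 else 1)
    | ProdNode \<Rightarrow> prod_list (map (val_f S x k) (spn_ch S v))
    | SumNode \<Rightarrow> sum_list (map (\<lambda>u. spn_w S v u * val_f S x k u) (spn_ch S v)))"

definition val :: "'v spn \<Rightarrow> (nat \<Rightarrow> bool) \<Rightarrow> 'v \<Rightarrow> real" where
  "val S x v = val_f S x (card (spn_nodes S)) v"

definition f_spn :: "'v spn \<Rightarrow> (nat \<Rightarrow> bool) \<Rightarrow> real" where
  "f_spn S x = val S x (spn_root S)"

definition assignments :: "nat \<Rightarrow> (nat \<Rightarrow> bool) set" where
  "assignments N = Pi\<^sub>E {1..N} (\<lambda>_. UNIV)"

definition Pr_spn :: "nat \<Rightarrow> 'v spn \<Rightarrow> (nat \<Rightarrow> bool) \<Rightarrow> real" where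
  "Pr_spn N S x = f_spn S x / (\<Sum>x'\<in>assignments N. f_spn S x')"

definition spn_over :: "nat \<Rightarrow> 'v spn \<Rightarrow> bool" where
  "spn_over N S \<longleftrightarrow> scope S (spn_root S) = {1..N}"

definition complete :: "'v spn \<Rightarrow> bool" where
  "complete S \<longleftrightarrow> (\<forall>v\<in>sum_nodes S. \<forall>u\<in>set (spn_ch S v). \<forall>u'\<in>set (spn_ch S v).
      scope S u = scope S u')"

definition decomposable :: "'v spn \<Rightarrow> bool" where
  "decomposable S \<longleftrightarrow> (\<forall>v\<in>spn_nodes S. spn_kind S v = ProdNode \<longrightarrow>
      (\<forall>i<length (spn_ch S v). \<forall>j<length (spn_ch S v). i \<noteq> j \<longrightarrow>
          scope S (spn_ch S v ! i) \<inter> scope S (spn_ch S v ! j) = {}))"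

definition normal :: "'v spn \<Rightarrow> bool" where
  "normal S \<longleftrightarrow> complete S \<and> decomposable S
     \<and> (\<forall>v\<in>sum_nodes S. (\<forall>u\<in>set (spn_ch S v). spn_w S v u \<ge> 0)
                          \<and> sum_list (map (spn_w S v) (spn_ch S v)) = 1)
     \<and> (\<forall>v\<in>spn_nodes S. is_terminal (spn_kind S v) \<longrightarrow>
           (\<exists>n p. spn_kind S v = Dist n p \<and> 0 \<le> p \<and> p \<le> 1))
     \<and> (\<forall>v\<in>sum_nodes S. card (scope S v) \<ge> 2)"

text \<open>An ADD node is either an inner node labelled by a (hidden) variable H whose i-th
  out-edge (i = 1..l) goes to the i-th element of the list, or a terminal carrying a
  Bernoulli distribution (parameter p = probability of true) over the observable variable.\<close>

datatype ('a,'h) add_node = ADDInner 'h "'a list" | ADDLeaf real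

record ('a,'h) add =
  add_nodes :: "'a set"
  add_root  :: 'a
  add_node  :: "'a \<Rightarrow> ('a,'h) add_node"

fun add_follow :: "('a,'h) add \<Rightarrow> ('h \<Rightarrow> nat) \<Rightarrow> nat \<Rightarrow> 'a \<Rightarrow> 'a" where
  "add_follow A h 0 a = a"
| "add_follow A h (Suc k) a = (case add_node A a of
      ADDInner H succs \<Rightarrow> add_follow A h k (succs ! (h H - 1))
    | ADDLeaf p \<Rightarrow> a)"

text \<open>Pr(X = b | Pa(X) = h) read off the terminal reached from the root.\<close>
definition add_cpd :: "('a,'h) add \<Rightarrow> ('h \<Rightarrow> nat) \<Rightarrow> bool \<Rightarrow> real" where
  "add_cpd A h b = (case add_node A (add_follow A h (card (add_nodes A)) (add_root A)) of
      ADDLeaf p \<Rightarrow> (if b then p else 1 - p)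
    | ADDInner H s \<Rightarrow> 0)"

text \<open>Image of a node of the subgraph induced by the nodes whose scope contains X after
  contracting product nodes (each such product node has a unique child containing X).\<close>
fun contract_f :: "'v spn \<Rightarrow> nat \<Rightarrow> nat \<Rightarrow> 'v \<Rightarrow> 'v" where
  "contract_f S X 0 u = u"
| "contract_f S X (Suc k) u = (if spn_kind S u = ProdNode
      then contract_f S X k (THE c. c \<in> set (spn_ch S u) \<and> X \<in> scope S c)
      else u)"

definition contract :: "'v spn \<Rightarrow> nat \<Rightarrow> 'v \<Rightarrow> 'v" where
  "contract S X u = contract_f S X (card (spn_nodes S)) u"

text \<open>The ADD CPD A_X of observable X; inner nodes are labelled by the sum node v
  (standing for the hidden variable H_v).\<close>
definition add_of :: "'v spn \<Rightarrow> nat \<Rightarrow> ('v,'v) add" where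
  "add_of S X = \<lparr> add_nodes = {u \<in> spn_nodes S. X \<in> scope S u \<and> spn_kind S u \<noteq> ProdNode},
      add_root = contract S X (spn_root S),
      add_node = (\<lambda>u. case spn_kind S u of
          SumNode \<Rightarrow> ADDInner u (map (contract S X) (spn_ch S u))
        | Dist n p \<Rightarrow> ADDLeaf p
        | _ \<Rightarrow> ADDLeaf 0) \<rparr>"

text \<open>Parents of X in the BN: the hidden variables H_v with X in scope(v).\<close>
definition parents :: "'v spn \<Rightarrow> nat \<Rightarrow> 'v set" where
  "parents S X = {v \<in> sum_nodes S. X \<in> scope S v}"

definition hidden_assignments :: "'v spn \<Rightarrow> ('v \<Rightarrow> nat) set" where
  "hidden_assignments S = Pi\<^sub>E (sum_nodes S) (\<lambda>v. {1..length (spn_ch S v)})"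

definition hidden_cpd :: "'v spn \<Rightarrow> 'v \<Rightarrow> nat \<Rightarrow> real" where
  "hidden_cpd S v i = spn_w S v (spn_ch S v ! (i - 1))"

definition Pr_bn_joint :: "nat \<Rightarrow> 'v spn \<Rightarrow> (nat \<Rightarrow> bool) \<Rightarrow> ('v \<Rightarrow> nat) \<Rightarrow> real" where
  "Pr_bn_joint N S x h =
     (\<Prod>v\<in>sum_nodes S. hidden_cpd S v (h v))
     * (\<Prod>X\<in>{1..N}. add_cpd (add_of S X) (restrict h (parents S X)) (x X))"

definition Pr_bn :: "nat \<Rightarrow> 'v spn \<Rightarrow> (nat \<Rightarrow> bool) \<Rightarrow> real" where
  "Pr_bn N S x = (\<Sum>h\<in>hidden_assignments S. Pr_bn_joint N S x h)"

end

theory Submission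
  imports Defs
begin

text \<open>Fix an assignment \<open>h\<close> of the hidden variables. Following \<open>h\<close> at sum nodes and,
  for a given observable \<open>X\<close>, the unique child containing \<open>X\<close> at product nodes, every node
  \<open>v\<close> with \<open>X \<in> scope v\<close> leads to a terminal; this is exactly the terminal the ADD \<open>A\<^sub>X\<close>
  reaches from the image of \<open>v\<close>. Let \<open>branch_prob v x h\<close> be the product over \<open>X \<in> scope v\<close>
  of the probabilities of \<open>x X\<close> at these terminals. By induction over the DAG, the value of
  \<open>v\<close> is the expectation of \<open>branch_prob v x\<close> when the hidden variables of the sum nodes
  below \<open>v\<close> are drawn from their stumps: at a sum node one conditions on \<open>H\<^sub>v\<close>, and at a
  product node the children's scopes, hence their sets of sum descendants, are disjoint, so
  the expectation factorises. At the root this is the marginal \<open>Pr\<^sub>B(x)\<close>; summing over \<open>x\<close>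
  gives 1, so \<open>f\<^sub>S\<close> needs no normalisation.\<close>

lemma finite_scope_f: "finite (scope_f S k v)"
  by (induction k arbitrary: v) (auto split: spn_kind.splits)

lemma sum_atLeast1_nth_eq_sum_list:
  "(\<Sum>i\<in>{1..length cs}. g (cs ! (i - 1))) = sum_list (map g cs)"
proof -
  have "(\<Sum>i\<in>{1..length cs}. g (cs ! (i - 1))) = (\<Sum>i\<in>Suc ` {0..<length cs}. g (cs ! (i - 1)))"
    by (simp add: atLeastLessThanSuc_atLeastAtMost)
  also have "\<dots> = (\<Sum>j<length cs. g (cs ! j))"
    by (subst sum.reindex) (auto simp: atLeast0LessThan)
  finally show ?thesis by (simp add: sum_list_sum_nth atLeast0LessThan)
qed

text \<open>The number of strict descendants of \<open>v\<close> inside \<open>M\<close>; in an acyclic graph it strictly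
  decreases along edges, so it serves both as induction measure and as a bound on the fuel
  needed by the recursive definitions.\<close>
definition height_in :: "'v spn \<Rightarrow> 'v set \<Rightarrow> 'v \<Rightarrow> nat" where
  "height_in S M v = card {b\<in>M. (v,b) \<in> (spn_edges S)\<^sup>+}"

locale normal_spn =
  fixes S :: "'v spn"
  assumes wf: "spn_wf S" and normal: "normal S"
begin

abbreviation "E \<equiv> spn_edges S"
abbreviation "V \<equiv> spn_nodes S"
abbreviation "height \<equiv> height_in S V"

lemma finite_nodes: "finite V"
  and root_in_nodes: "spn_root S \<in> V"
  and acyclic_edges: "acyclic E"
  and root_reaches: "v \<in> V \<Longrightarrow> (spn_root S, v) \<in> E\<^sup>*"
  and child_in_nodes: "v \<in> V \<Longrightarrow> u \<in> set (spn_ch S v) \<Longrightarrow> u \<in> V"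
  and distinct_children: "v \<in> V \<Longrightarrow> distinct (spn_ch S v)"
  and terminal_iff_no_children: "v \<in> V \<Longrightarrow> is_terminal (spn_kind S v) \<longleftrightarrow> spn_ch S v = []"
  using wf by (auto simp: spn_wf_def)

lemma edgeI: "v \<in> V \<Longrightarrow> u \<in> set (spn_ch S v) \<Longrightarrow> (v,u) \<in> E"
  and edgeD: "(v,u) \<in> E \<Longrightarrow> v \<in> V \<and> u \<in> set (spn_ch S v)"
  by (simp_all add: spn_edges_def)

lemma rtrancl_in_nodes: "(v,d) \<in> E\<^sup>* \<Longrightarrow> v \<in> V \<Longrightarrow> d \<in> V"
  by (induction rule: rtrancl_induct) (auto dest!: edgeD intro: child_in_nodes)

lemma reaches_iff: "v \<in> V \<Longrightarrow> (v,s) \<in> E\<^sup>* \<longleftrightarrow> s = v \<or> (\<exists>u\<in>set (spn_ch S v). (u,s) \<in> E\<^sup>*)"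
  by (auto elim: converse_rtranclE dest: edgeD intro: converse_rtrancl_into_rtrancl edgeI)

lemma height_in_strict_mono:
  assumes "finite M" "(v,u) \<in> E\<^sup>+" "u \<in> M"
  shows "height_in S M u < height_in S M v"
proof -
  have "(u,u) \<notin> E\<^sup>+" using acyclic_edges by (simp add: acyclic_def)
  then have "{b\<in>M. (u,b) \<in> E\<^sup>+} \<subset> {b\<in>M. (v,b) \<in> E\<^sup>+}" using assms(2,3) by auto
  then show ?thesis unfolding height_in_def using assms(1) by (simp add: psubset_card_mono)
qed

lemma height_in_less_card: "finite M \<Longrightarrow> v \<in> M \<Longrightarrow> height_in S M v < card M"
proof -
  assume "finite M" "v \<in> M"
  moreover have "(v,v) \<notin> E\<^sup>+" using acyclic_edges by (simp add: acyclic_def)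
  ultimately show ?thesis unfolding height_in_def by (blast intro: psubset_card_mono)
qed

lemma height_child_less: "v \<in> V \<Longrightarrow> u \<in> set (spn_ch S v) \<Longrightarrow> height u < height v"
  by (rule height_in_strict_mono) (auto intro: finite_nodes edgeI child_in_nodes)

lemma card_nodes_Suc: obtains m where "card V = Suc m"
  using height_in_less_card[OF finite_nodes root_in_nodes] by (cases "card V") auto

lemma val_f_fuel: "v \<in> V \<Longrightarrow> height v < k \<Longrightarrow> height v < k' \<Longrightarrow> val_f S x k v = val_f S x k' v"
proof (induction k arbitrary: v k')
  case (Suc k)
  then obtain k'' where k': "k' = Suc k''" by (cases k') auto
  have "u \<in> set (spn_ch S v) \<Longrightarrow> val_f S x k u = val_f S x k'' u" for u
    using Suc.IH[of u k''] Suc.prems height_child_less[of v u] child_in_nodes[of v u] k' by auto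
  then show ?case unfolding k'
    by (auto split: spn_kind.splits intro!: arg_cong[where f=prod_list] arg_cong[where f=sum_list])
qed simp

lemma scope_f_fuel: "v \<in> V \<Longrightarrow> height v < k \<Longrightarrow> height v < k' \<Longrightarrow> scope_f S k v = scope_f S k' v"
proof (induction k arbitrary: v k')
  case (Suc k)
  then obtain k'' where k': "k' = Suc k''" by (cases k') auto
  have "u \<in> set (spn_ch S v) \<Longrightarrow> scope_f S k u = scope_f S k'' u" for u
    using Suc.IH[of u k''] Suc.prems height_child_less[of v u] child_in_nodes[of v u] k' by auto
  then show ?case unfolding k' by (auto split: spn_kind.splits)
qed simp

lemma val_eq: "v \<in> V \<Longrightarrow> val S x v = (case spn_kind S v of
      Ind n b \<Rightarrow> (if x n = b then 1 else 0)
    | Dist n p \<Rightarrow> p * (if x n then 1 else 0) + (1 - p) * (if x n then 0 else 1)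
    | ProdNode \<Rightarrow> prod_list (map (val S x) (spn_ch S v))
    | SumNode \<Rightarrow> sum_list (map (\<lambda>u. spn_w S v u * val S x u) (spn_ch S v)))"
proof -
  assume v: "v \<in> V"
  obtain m where m: "card V = Suc m" by (rule card_nodes_Suc)
  have "u \<in> set (spn_ch S v) \<Longrightarrow> val_f S x m u = val_f S x (Suc m) u" for u
    using val_f_fuel[of u m "card V"] height_child_less[OF v, of u]
      height_in_less_card[OF finite_nodes v] child_in_nodes[OF v, of u] m
    by auto
  then have children: "map (val_f S x m) (spn_ch S v) = map (val_f S x (Suc m)) (spn_ch S v)"
    "map (\<lambda>u. spn_w S v u * val_f S x m u) (spn_ch S v)
         = map (\<lambda>u. spn_w S v u * val_f S x (Suc m) u) (spn_ch S v)"
    by auto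
  then show ?thesis unfolding val_def m val_f.simps children by (simp split: spn_kind.splits)
qed

lemma scope_eq: "v \<in> V \<Longrightarrow> scope S v = (case spn_kind S v of
      Ind n b \<Rightarrow> {n}
    | Dist n p \<Rightarrow> {n}
    | _ \<Rightarrow> (\<Union>u\<in>set (spn_ch S v). scope S u))"
proof -
  assume v: "v \<in> V"
  obtain m where m: "card V = Suc m" by (rule card_nodes_Suc)
  have "u \<in> set (spn_ch S v) \<Longrightarrow> scope_f S m u = scope_f S (Suc m) u" for u
    using scope_f_fuel[of u m "card V"] height_child_less[OF v, of u]
      height_in_less_card[OF finite_nodes v] child_in_nodes[OF v, of u] m
    by auto
  then have children: "(\<Union>u\<in>set (spn_ch S v). scope_f S m u) = (\<Union>u\<in>set (spn_ch S v). scope_f S (Suc m) u)"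
    by auto
  show ?thesis unfolding scope_def m scope_f.simps children by (simp split: spn_kind.splits)
qed

lemma complete_S: "complete S" and decomposable_S: "decomposable S"
  and sum_weights_one: "v \<in> sum_nodes S \<Longrightarrow> sum_list (map (spn_w S v) (spn_ch S v)) = 1"
  and terminal_is_Dist:
    "v \<in> V \<Longrightarrow> is_terminal (spn_kind S v) \<Longrightarrow> \<exists>n p. spn_kind S v = Dist n p \<and> 0 \<le> p \<and> p \<le> 1"
  using normal by (auto simp: normal_def)

lemma sum_nodes_iff: "v \<in> sum_nodes S \<longleftrightarrow> v \<in> V \<and> spn_kind S v = SumNode"
  by (simp add: sum_nodes_def)

lemma finite_sum_nodes: "finite (sum_nodes S)"
  using finite_nodes by (simp add: sum_nodes_def)

lemma node_kind_cases:
  assumes "v \<in> V"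
  obtains "spn_kind S v = SumNode" | "spn_kind S v = ProdNode"
    | n p where "spn_kind S v = Dist n p" "0 \<le> p" "p \<le> 1"
  using terminal_is_Dist[OF assms] by (cases "spn_kind S v") (auto simp: is_terminal_def)

lemma inner_children_nonempty:
  "v \<in> V \<Longrightarrow> spn_kind S v = SumNode \<or> spn_kind S v = ProdNode \<Longrightarrow> spn_ch S v \<noteq> []"
  using terminal_iff_no_children[of v] by (auto simp: is_terminal_def)

lemma Dist_no_children: "v \<in> V \<Longrightarrow> spn_kind S v = Dist n p \<Longrightarrow> spn_ch S v = []"
  using terminal_iff_no_children[of v] by (auto simp: is_terminal_def)

lemma scope_Dist: "v \<in> V \<Longrightarrow> spn_kind S v = Dist n p \<Longrightarrow> scope S v = {n}"
  by (simp add: scope_eq)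

lemma scope_inner: "v \<in> V \<Longrightarrow> spn_kind S v = SumNode \<or> spn_kind S v = ProdNode \<Longrightarrow>
   scope S v = (\<Union>u\<in>set (spn_ch S v). scope S u)"
  by (auto simp: scope_eq)

lemma finite_scope: "finite (scope S v)"
  by (simp add: scope_def finite_scope_f)

lemma scope_nonempty: "v \<in> V \<Longrightarrow> scope S v \<noteq> {}"
proof (induction "height v" arbitrary: v rule: less_induct)
  case less
  note v = less.prems
  show ?case
  proof (cases "spn_kind S v = SumNode \<or> spn_kind S v = ProdNode")
    case True
    then obtain u where "u \<in> set (spn_ch S v)"
      using inner_children_nonempty[OF v] by (cases "spn_ch S v") auto
    then show ?thesis
      using less.hyps[of u] height_child_less[OF v] child_in_nodes[OF v] scope_inner[OF v True] by blast
  next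
    case False
    then obtain n p where "spn_kind S v = Dist n p" by (cases rule: node_kind_cases[OF v]) auto
    then show ?thesis using scope_Dist[OF v] by simp
  qed
qed

lemma scope_child_subset: "v \<in> V \<Longrightarrow> u \<in> set (spn_ch S v) \<Longrightarrow> scope S u \<subseteq> scope S v"
  by (rule node_kind_cases[of v]) (auto simp: scope_inner Dist_no_children)

lemma scope_descendant_subset: "(v,d) \<in> E\<^sup>* \<Longrightarrow> v \<in> V \<Longrightarrow> scope S d \<subseteq> scope S v"
proof (induction rule: rtrancl_induct)
  case (step y z)
  then show ?case using scope_child_subset[of y z] edgeD[of y z] by blast
qed simp

lemma scope_sum_child:
  assumes "v \<in> V" "spn_kind S v = SumNode" "u \<in> set (spn_ch S v)"
  shows "scope S u = scope S v"
proof -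
  have "v \<in> sum_nodes S" using assms by (simp add: sum_nodes_iff)
  then have "scope S u' = scope S u" if "u' \<in> set (spn_ch S v)" for u'
    using complete_S assms(3) that unfolding complete_def by metis
  then have "(\<Union>u'\<in>set (spn_ch S v). scope S u') = scope S u" using assms(3) by blast
  then show ?thesis using scope_inner[of v] assms(1,2) by simp
qed

lemma scope_prod_children_disjoint:
  assumes "v \<in> V" "spn_kind S v = ProdNode" "u1 \<in> set (spn_ch S v)" "u2 \<in> set (spn_ch S v)" "u1 \<noteq> u2"
  shows "scope S u1 \<inter> scope S u2 = {}"
proof -
  obtain i j where "i < length (spn_ch S v)" "spn_ch S v ! i = u1"
    "j < length (spn_ch S v)" "spn_ch S v ! j = u2"
    using assms(3,4) by (auto simp: in_set_conv_nth)
  then show ?thesis using decomposable_S assms by (auto simp: decomposable_def)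
qed

lemma prod_child_unique: "v \<in> V \<Longrightarrow> spn_kind S v = ProdNode \<Longrightarrow> X \<in> scope S v \<Longrightarrow>
   \<exists>!c. c \<in> set (spn_ch S v) \<and> X \<in> scope S c"
  using scope_inner[of v] scope_prod_children_disjoint[of v] by auto

definition sum_desc :: "'v \<Rightarrow> 'v set" where
  "sum_desc v = {s \<in> sum_nodes S. (v,s) \<in> E\<^sup>*}"

lemma sum_desc_subset: "sum_desc v \<subseteq> sum_nodes S"
  by (auto simp: sum_desc_def)

lemma finite_sum_desc: "finite (sum_desc v)"
  using sum_desc_subset finite_sum_nodes finite_subset by blast

lemma sum_desc_Dist: "v \<in> V \<Longrightarrow> spn_kind S v = Dist n p \<Longrightarrow> sum_desc v = {}"
  by (auto simp: sum_desc_def reaches_iff Dist_no_children sum_nodes_iff)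

lemma sum_desc_prod: "v \<in> V \<Longrightarrow> spn_kind S v = ProdNode \<Longrightarrow>
   sum_desc v = (\<Union>u\<in>set (spn_ch S v). sum_desc u)"
  by (auto simp: sum_desc_def reaches_iff sum_nodes_iff)

lemma sum_desc_sum: "v \<in> V \<Longrightarrow> spn_kind S v = SumNode \<Longrightarrow>
   sum_desc v = insert v (\<Union>u\<in>set (spn_ch S v). sum_desc u)"
  by (auto simp: sum_desc_def reaches_iff sum_nodes_iff)

lemma sum_desc_root: "sum_desc (spn_root S) = sum_nodes S"
  using root_reaches by (auto simp: sum_desc_def sum_nodes_iff)

lemma sum_desc_child_subset: "v \<in> V \<Longrightarrow> u \<in> set (spn_ch S v) \<Longrightarrow> sum_desc u \<subseteq> sum_desc v"
  by (auto simp: sum_desc_def reaches_iff)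

lemma notin_sum_desc_child: "v \<in> V \<Longrightarrow> u \<in> set (spn_ch S v) \<Longrightarrow> v \<notin> sum_desc u"
proof
  assume "v \<in> V" "u \<in> set (spn_ch S v)" "v \<in> sum_desc u"
  then have "(v,v) \<in> E\<^sup>+"
    by (auto simp: sum_desc_def intro: edgeI rtrancl_into_trancl2)
  then show False using acyclic_edges by (simp add: acyclic_def)
qed

text \<open>A common sum descendant would put its nonempty scope into the scopes of both children.\<close>
lemma sum_desc_prod_children_disjoint:
  assumes "v \<in> V" "spn_kind S v = ProdNode" "u1 \<in> set (spn_ch S v)" "u2 \<in> set (spn_ch S v)" "u1 \<noteq> u2"
  shows "sum_desc u1 \<inter> sum_desc u2 = {}"
proof (rule ccontr)
  assume "sum_desc u1 \<inter> sum_desc u2 \<noteq> {}"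
  then obtain s where s: "(u1,s) \<in> E\<^sup>*" "(u2,s) \<in> E\<^sup>*" by (auto simp: sum_desc_def)
  have "u1 \<in> V" "u2 \<in> V" using assms child_in_nodes by auto
  then have "scope S s \<subseteq> scope S u1 \<inter> scope S u2" "s \<in> V"
    using scope_descendant_subset s rtrancl_in_nodes by blast+
  then show False using scope_prod_children_disjoint[OF assms] scope_nonempty by blast
qed

section \<open>Following the ADD of an observable\<close>

definition prod_child :: "nat \<Rightarrow> 'v \<Rightarrow> 'v" where
  "prod_child X v = (THE c. c \<in> set (spn_ch S v) \<and> X \<in> scope S c)"

lemma prod_child_spec:
  assumes "v \<in> V" "spn_kind S v = ProdNode" "X \<in> scope S v"
  shows "prod_child X v \<in> set (spn_ch S v)" "X \<in> scope S (prod_child X v)"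
    "c \<in> set (spn_ch S v) \<Longrightarrow> X \<in> scope S c \<Longrightarrow> c = prod_child X v"
proof -
  show "prod_child X v \<in> set (spn_ch S v)" "X \<in> scope S (prod_child X v)"
    using theI'[OF prod_child_unique[OF assms]] unfolding prod_child_def by simp_all
  show "c \<in> set (spn_ch S v) \<Longrightarrow> X \<in> scope S c \<Longrightarrow> c = prod_child X v"
    unfolding prod_child_def by (rule the1_equality[OF prod_child_unique[OF assms], symmetric]) simp
qed

lemma contract_f_fuel: "u \<in> V \<Longrightarrow> X \<in> scope S u \<Longrightarrow> height u < k \<Longrightarrow> height u < k' \<Longrightarrow>
   contract_f S X k u = contract_f S X k' u"
proof (induction k arbitrary: u k')
  case (Suc k)
  then obtain k'' where k': "k' = Suc k''" by (cases k') auto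
  show ?case
  proof (cases "spn_kind S u = ProdNode")
    case True
    note c = prod_child_spec[OF Suc.prems(1) True Suc.prems(2)]
    have "height (prod_child X u) < height u" by (rule height_child_less[OF Suc.prems(1) c(1)])
    then have "contract_f S X k (prod_child X u) = contract_f S X k'' (prod_child X u)"
      using Suc.IH[OF child_in_nodes[OF Suc.prems(1) c(1)] c(2), of k''] Suc.prems(3,4) k'
      by simp
    then show ?thesis using True k' by (simp add: prod_child_def)
  qed (simp add: k')
qed simp

lemma contract_prod:
  assumes "u \<in> V" "X \<in> scope S u" "spn_kind S u = ProdNode"
  shows "contract S X u = contract S X (prod_child X u)"
proof -
  obtain m where m: "card V = Suc m" by (rule card_nodes_Suc)
  note c = prod_child_spec[OF assms(1,3,2)]
  have "height (prod_child X u) < height u" by (rule height_child_less[OF assms(1) c(1)])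
  then have "contract_f S X m (prod_child X u) = contract_f S X (card V) (prod_child X u)"
    using contract_f_fuel[OF child_in_nodes[OF assms(1) c(1)] c(2), of m "card V"]
      height_in_less_card[OF finite_nodes assms(1)] m
    by simp
  moreover have "contract_f S X (Suc m) u = contract_f S X m (prod_child X u)"
    unfolding contract_f.simps prod_child_def by (simp only: assms(3) simp_thms if_True)
  ultimately show ?thesis unfolding contract_def m by simp
qed

lemma contract_non_prod: "spn_kind S u \<noteq> ProdNode \<Longrightarrow> contract S X u = u"
  by (cases rule: card_nodes_Suc) (simp add: contract_def)

abbreviation "add_node_set X \<equiv> add_nodes (add_of S X)"

lemma add_node_set_eq: "add_node_set X = {u \<in> V. X \<in> scope S u \<and> spn_kind S u \<noteq> ProdNode}"
  by (simp add: add_of_def)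

lemma finite_add_node_set: "finite (add_node_set X)"
  using finite_nodes by (simp add: add_node_set_eq)

lemma add_node_add_of: "add_node (add_of S X) u = (case spn_kind S u of
          SumNode \<Rightarrow> ADDInner u (map (contract S X) (spn_ch S u))
        | Dist n p \<Rightarrow> ADDLeaf p
        | _ \<Rightarrow> ADDLeaf 0)"
  by (simp add: add_of_def)

lemma contract_in_add_node_set:
  "u \<in> V \<Longrightarrow> X \<in> scope S u \<Longrightarrow> contract S X u \<in> add_node_set X \<and> (u, contract S X u) \<in> E\<^sup>*"
proof (induction "height u" arbitrary: u rule: less_induct)
  case less
  show ?case
  proof (cases "spn_kind S u = ProdNode")
    case True
    note c = prod_child_spec[OF less.prems(1) True less.prems(2)]
    have "contract S X (prod_child X u) \<in> add_node_set X \<and> (prod_child X u, contract S X (prod_child X u)) \<in> E\<^sup>*"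
      by (rule less.hyps[OF height_child_less[OF less.prems(1) c(1)] child_in_nodes[OF less.prems(1) c(1)] c(2)])
    then show ?thesis using contract_prod[OF less.prems True] edgeI[OF less.prems(1) c(1)]
      by (metis converse_rtrancl_into_rtrancl)
  next
    case False
    then show ?thesis using less.prems by (simp add: contract_non_prod add_node_set_eq)
  qed
qed

abbreviation hidden_range :: "'v \<Rightarrow> nat set" where
  "hidden_range s \<equiv> {1..length (spn_ch S s)}"

definition valid_hidden :: "('v \<Rightarrow> nat) \<Rightarrow> bool" where
  "valid_hidden h \<longleftrightarrow> (\<forall>s\<in>sum_nodes S. h s \<in> hidden_range s)"

lemma valid_hidden_upd: "valid_hidden h \<Longrightarrow> i \<in> hidden_range v \<Longrightarrow> valid_hidden (h(v := i))"
  unfolding valid_hidden_def by auto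

lemma valid_hidden_child: "valid_hidden h \<Longrightarrow> a \<in> V \<Longrightarrow> spn_kind S a = SumNode \<Longrightarrow>
   h a - 1 < length (spn_ch S a) \<and> spn_ch S a ! (h a - 1) \<in> set (spn_ch S a)"
  by (force simp: valid_hidden_def sum_nodes_iff)

definition add_succ :: "nat \<Rightarrow> ('v \<Rightarrow> nat) \<Rightarrow> 'v \<Rightarrow> 'v" where
  "add_succ X h a = contract S X (spn_ch S a ! (h a - 1))"

lemma add_succ_props:
  assumes "a \<in> V" "X \<in> scope S a" "spn_kind S a = SumNode" "valid_hidden h"
  shows "add_succ X h a \<in> add_node_set X"
    "height_in S (add_node_set X) (add_succ X h a) < height_in S (add_node_set X) a"
proof -
  let ?c = "spn_ch S a ! (h a - 1)"
  have c: "?c \<in> set (spn_ch S a)" using valid_hidden_child[OF assms(4,1,3)] by blast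
  have "X \<in> scope S ?c" using scope_sum_child[OF assms(1,3) c] assms(2) by simp
  then have "contract S X ?c \<in> add_node_set X \<and> (?c, contract S X ?c) \<in> E\<^sup>*"
    by (rule contract_in_add_node_set[OF child_in_nodes[OF assms(1) c]])
  then have succ: "add_succ X h a \<in> add_node_set X" "(?c, add_succ X h a) \<in> E\<^sup>*"
    unfolding add_succ_def by blast+
  have "(a, add_succ X h a) \<in> E\<^sup>+"
    using edgeI[OF assms(1) c] succ(2) by (rule rtrancl_into_trancl2)
  with succ(1) show "add_succ X h a \<in> add_node_set X"
    "height_in S (add_node_set X) (add_succ X h a) < height_in S (add_node_set X) a"
    by (simp_all add: height_in_strict_mono[OF finite_add_node_set])
qed

lemma add_follow_non_sum: "spn_kind S a \<noteq> SumNode \<Longrightarrow> add_follow (add_of S X) g k a = a"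
  by (cases k) (auto simp: add_node_add_of split: spn_kind.splits)

lemma add_follow_sum:
  assumes "a \<in> V" "X \<in> scope S a" "spn_kind S a = SumNode" "valid_hidden h"
  shows "add_follow (add_of S X) (restrict h (parents S X)) (Suc k) a
       = add_follow (add_of S X) (restrict h (parents S X)) k (add_succ X h a)"
proof -
  have "a \<in> parents S X" using assms by (simp add: parents_def sum_nodes_iff)
  then show ?thesis using assms valid_hidden_child[OF assms(4,1,3)]
    by (simp add: add_node_add_of add_succ_def)
qed

lemma add_follow_fuel:
  "a \<in> add_node_set X \<Longrightarrow> valid_hidden h \<Longrightarrow>
   height_in S (add_node_set X) a \<le> k \<Longrightarrow> height_in S (add_node_set X) a \<le> k' \<Longrightarrow>
   add_follow (add_of S X) (restrict h (parents S X)) k a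
   = add_follow (add_of S X) (restrict h (parents S X)) k' a"
proof (induction k arbitrary: a k')
  case 0
  show ?case
  proof (cases "spn_kind S a = SumNode")
    case True
    then show ?thesis
      using 0 add_succ_props(2)[of a X h] by (simp add: add_node_set_eq)
  qed (metis add_follow_non_sum)
next
  case (Suc k)
  show ?case
  proof (cases "spn_kind S a = SumNode")
    case True
    have a: "a \<in> V" "X \<in> scope S a" using Suc.prems by (auto simp: add_node_set_eq)
    note succ = add_succ_props[OF a True Suc.prems(2)]
    obtain k'' where k': "k' = Suc k''" using Suc.prems succ(2) by (cases k') auto
    show ?thesis unfolding k' add_follow_sum[OF a True Suc.prems(2)]
      using Suc.IH[OF succ(1) Suc.prems(2), of k''] succ(2) Suc.prems(3,4) k' by (simp add: restrict_def)
  qed (metis add_follow_non_sum)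
qed

definition add_leaf :: "nat \<Rightarrow> ('v \<Rightarrow> nat) \<Rightarrow> 'v \<Rightarrow> 'v" where
  "add_leaf X h a = add_follow (add_of S X) (restrict h (parents S X)) (card (add_node_set X)) a"

lemma add_leaf_non_sum: "spn_kind S a \<noteq> SumNode \<Longrightarrow> add_leaf X h a = a"
  by (simp add: add_leaf_def add_follow_non_sum)

lemma add_leaf_sum:
  assumes "a \<in> V" "X \<in> scope S a" "spn_kind S a = SumNode" "valid_hidden h"
  shows "add_leaf X h a = add_leaf X h (add_succ X h a)"
proof -
  note succ = add_succ_props[OF assms]
  have "a \<in> add_node_set X" using assms by (simp add: add_node_set_eq)
  then have lt: "height_in S (add_node_set X) a < card (add_node_set X)"
    by (rule height_in_less_card[OF finite_add_node_set])
  then obtain m where m: "card (add_node_set X) = Suc m" by (cases "card (add_node_set X)") auto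
  have lt': "height_in S (add_node_set X) (add_succ X h a) < card (add_node_set X)"
    by (rule height_in_less_card[OF finite_add_node_set succ(1)])
  show ?thesis unfolding add_leaf_def m add_follow_sum[OF assms]
    using add_follow_fuel[OF succ(1) assms(4), of m "Suc m"] lt lt' succ(2) m by simp
qed

text \<open>The probability of \<open>b\<close> at the terminal that \<open>A\<^sub>X\<close> reaches under \<open>h\<close>, starting from the image
  of \<open>v\<close> rather than from the root.\<close>
definition leaf_prob :: "nat \<Rightarrow> ('v \<Rightarrow> nat) \<Rightarrow> 'v \<Rightarrow> bool \<Rightarrow> real" where
  "leaf_prob X h v b = (case add_node (add_of S X) (add_leaf X h (contract S X v)) of
      ADDLeaf p \<Rightarrow> (if b then p else 1 - p) | ADDInner H s \<Rightarrow> 0)"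

lemma leaf_prob_prod: "v \<in> V \<Longrightarrow> spn_kind S v = ProdNode \<Longrightarrow> X \<in> scope S v \<Longrightarrow>
   leaf_prob X h v b = leaf_prob X h (prod_child X v) b"
  by (simp add: leaf_prob_def contract_prod)

lemma leaf_prob_sum: "v \<in> V \<Longrightarrow> spn_kind S v = SumNode \<Longrightarrow> X \<in> scope S v \<Longrightarrow> valid_hidden h \<Longrightarrow>
   leaf_prob X h v b = leaf_prob X h (spn_ch S v ! (h v - 1)) b"
  by (simp add: leaf_prob_def contract_non_prod add_leaf_sum add_succ_def)

lemma leaf_prob_Dist: "spn_kind S v = Dist n p \<Longrightarrow> leaf_prob X h v b = (if b then p else 1 - p)"
  by (simp add: leaf_prob_def contract_non_prod add_leaf_non_sum add_node_add_of)

lemma add_cpd_add_of: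
  "add_cpd (add_of S X) (restrict h (parents S X)) b = leaf_prob X h (spn_root S) b"
  by (simp add: add_cpd_def leaf_prob_def add_leaf_def) (simp add: add_of_def)

section \<open>Marginalising hidden variables\<close>

text \<open>The default value 1 is legal for every \<open>H\<^sub>s\<close> because every sum node has a child.\<close>
definition default_ext :: "'v set \<Rightarrow> ('v \<Rightarrow> nat) \<Rightarrow> 'v \<Rightarrow> nat" where
  "default_ext A h = (\<lambda>s. if s \<in> A then h s else 1)"

definition depends_on :: "(('v \<Rightarrow> nat) \<Rightarrow> real) \<Rightarrow> 'v set \<Rightarrow> bool" where
  "depends_on F A \<longleftrightarrow>
     (\<forall>h h'. valid_hidden h \<longrightarrow> valid_hidden h' \<longrightarrow> (\<forall>s\<in>A. h s = h' s) \<longrightarrow> F h = F h')"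

text \<open>The expectation of \<open>F\<close> when the hidden variables \<open>H\<^sub>s\<close>, \<open>s \<in> A\<close>, are drawn independently
  from their stumps.\<close>
definition marginal :: "'v set \<Rightarrow> (('v \<Rightarrow> nat) \<Rightarrow> real) \<Rightarrow> real" where
  "marginal A F =
     (\<Sum>h\<in>Pi\<^sub>E A hidden_range. (\<Prod>s\<in>A. hidden_cpd S s (h s)) * F (default_ext A h))"

lemma valid_hidden_default_ext:
  "A \<subseteq> sum_nodes S \<Longrightarrow> h \<in> Pi\<^sub>E A hidden_range \<Longrightarrow> valid_hidden (default_ext A h)"
  using inner_children_nonempty
  by (fastforce simp: valid_hidden_def default_ext_def sum_nodes_iff Suc_le_eq)

lemma valid_hidden_one: "valid_hidden (\<lambda>_. 1)"
  using valid_hidden_default_ext[of "{}"] by (simp add: default_ext_def)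

lemma depends_onD: "depends_on F A \<Longrightarrow> valid_hidden h \<Longrightarrow> valid_hidden h' \<Longrightarrow>
   (\<And>s. s \<in> A \<Longrightarrow> h s = h' s) \<Longrightarrow> F h = F h'"
  unfolding depends_on_def by blast

lemma depends_onI: "(\<And>h h'. valid_hidden h \<Longrightarrow> valid_hidden h' \<Longrightarrow> (\<And>s. s \<in> A \<Longrightarrow> h s = h' s)
   \<Longrightarrow> F h = F h') \<Longrightarrow> depends_on F A"
  unfolding depends_on_def by blast

lemma depends_on_mono: "depends_on F A \<Longrightarrow> A \<subseteq> B \<Longrightarrow> depends_on F B"
  unfolding depends_on_def by blast

lemma hidden_cpd_sum_one: "v \<in> sum_nodes S \<Longrightarrow> (\<Sum>i\<in>hidden_range v. hidden_cpd S v i) = 1"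
  unfolding hidden_cpd_def
  using sum_atLeast1_nth_eq_sum_list[of "spn_w S v" "spn_ch S v"] sum_weights_one by simp

lemma marginal_empty: "marginal {} F = F (\<lambda>_. 1)"
  by (simp add: marginal_def default_ext_def)

lemma marginal_cong:
  "A \<subseteq> sum_nodes S \<Longrightarrow> (\<And>h. valid_hidden h \<Longrightarrow> F h = F' h) \<Longrightarrow> marginal A F = marginal A F'"
  unfolding marginal_def by (rule sum.cong[OF refl]) (simp add: valid_hidden_default_ext)

lemma marginal_insert:
  assumes "v \<notin> A" "finite A"
  shows "marginal (insert v A) F
       = (\<Sum>i\<in>hidden_range v. hidden_cpd S v i * marginal A (\<lambda>h. F (h(v := i))))"
proof -
  have inj: "inj_on (\<lambda>(y, g). g(v := y)) (hidden_range v \<times> Pi\<^sub>E A hidden_range)"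
    by (rule inj_combinator[OF assms(1)])
  have "marginal (insert v A) F = (\<Sum>(i,g)\<in>hidden_range v \<times> Pi\<^sub>E A hidden_range.
      (\<Prod>s\<in>insert v A. hidden_cpd S s ((g(v:=i)) s)) * F (default_ext (insert v A) (g(v:=i))))"
    unfolding marginal_def PiE_insert_eq by (subst sum.reindex[OF inj]) (simp add: case_prod_unfold)
  also have "\<dots> = (\<Sum>(i,g)\<in>hidden_range v \<times> Pi\<^sub>E A hidden_range.
      hidden_cpd S v i * ((\<Prod>s\<in>A. hidden_cpd S s (g s)) * F ((default_ext A g)(v:=i))))"
  proof (rule sum.cong[OF refl], clarify)
    fix i g
    have "default_ext (insert v A) (g(v:=i)) = (default_ext A g)(v:=i)"
      by (auto simp: default_ext_def)
    moreover have "(\<Prod>s\<in>A. hidden_cpd S s ((g(v:=i)) s)) = (\<Prod>s\<in>A. hidden_cpd S s (g s))"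
      by (rule prod.cong) (use assms in auto)
    ultimately show "(\<Prod>s\<in>insert v A. hidden_cpd S s ((g(v:=i)) s)) * F (default_ext (insert v A) (g(v:=i)))
      = hidden_cpd S v i * ((\<Prod>s\<in>A. hidden_cpd S s (g s)) * F ((default_ext A g)(v:=i)))"
      using assms by simp
  qed
  also have "\<dots> = (\<Sum>i\<in>hidden_range v. hidden_cpd S v i * marginal A (\<lambda>h. F (h(v := i))))"
    unfolding sum.cartesian_product[symmetric] marginal_def by (simp add: sum_distrib_left)
  finally show ?thesis .
qed

lemma marginal_insert_irrelevant:
  assumes "v \<in> sum_nodes S" "v \<notin> A" "finite A" "A \<subseteq> sum_nodes S" "depends_on F A"
  shows "marginal (insert v A) F = marginal A F"
proof -
  have "marginal A (\<lambda>h. F (h(v := i))) = marginal A F" if i: "i \<in> hidden_range v" for i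
  proof (rule marginal_cong[OF assms(4)])
    fix h assume h: "valid_hidden h"
    show "F (h(v := i)) = F h"
      by (rule depends_onD[OF assms(5) valid_hidden_upd[OF h i] h]) (use assms(2) in auto)
  qed
  then have "marginal (insert v A) F = (\<Sum>i\<in>hidden_range v. hidden_cpd S v i * marginal A F)"
    unfolding marginal_insert[OF assms(2,3)] by simp
  also have "\<dots> = marginal A F"
    using hidden_cpd_sum_one[OF assms(1)] by (simp add: sum_distrib_right[symmetric])
  finally show ?thesis .
qed

lemma marginal_superset:
  assumes "A0 \<subseteq> A" "A \<subseteq> sum_nodes S" "depends_on F A0"
  shows "marginal A F = marginal A0 F"
proof -
  have extend: "finite B \<Longrightarrow> B \<subseteq> sum_nodes S \<Longrightarrow> B \<inter> A0 = {} \<Longrightarrow>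
      marginal (A0 \<union> B) F = marginal A0 F" for B
  proof (induction B rule: finite_induct)
    case (insert x B)
    have sub: "A0 \<union> B \<subseteq> sum_nodes S" using assms(1,2) insert.prems(1) by blast
    have "marginal (insert x (A0 \<union> B)) F = marginal (A0 \<union> B) F"
    proof (rule marginal_insert_irrelevant)
      show "x \<in> sum_nodes S" "x \<notin> A0 \<union> B" using insert.hyps(2) insert.prems by blast+
      show "finite (A0 \<union> B)" using sub finite_sum_nodes finite_subset by blast
      show "depends_on F (A0 \<union> B)" by (rule depends_on_mono[OF assms(3)]) blast
    qed (rule sub)
    then show ?case using insert by simp
  qed simp
  have "finite (A - A0)" using assms(2) finite_sum_nodes finite_subset by blast
  then have "marginal (A0 \<union> (A - A0)) F = marginal A0 F"
    by (rule extend) (use assms(2) in blast)+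
  moreover have "A0 \<union> (A - A0) = A" using assms(1) by blast
  ultimately show ?thesis by simp
qed

lemma marginal_mult:
  assumes "finite A" "A \<subseteq> sum_nodes S" "B \<subseteq> sum_nodes S" "A \<inter> B = {}"
    "depends_on F A" "depends_on G B"
  shows "marginal (A \<union> B) (\<lambda>h. F h * G h) = marginal A F * marginal B G"
  using assms
proof (induction A arbitrary: F rule: finite_induct)
  case empty
  have "marginal B (\<lambda>h. F h * G h) = marginal B (\<lambda>h. F (\<lambda>_. 1) * G h)"
  proof (rule marginal_cong[OF empty(2)])
    fix h assume "valid_hidden h"
    then show "F h * G h = F (\<lambda>_. 1) * G h"
      using depends_onD[OF empty(4) _ valid_hidden_one] by simp
  qed
  then show ?case
    unfolding marginal_empty Un_empty_left by (simp add: marginal_def sum_distrib_left mult.left_commute)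
next
  case (insert x A)
  have x: "x \<notin> B" "x \<notin> A \<union> B" using insert(2,6) by blast+
  have AB: "A \<union> B \<subseteq> sum_nodes S" using insert(4,5) by blast
  then have finite_AB: "finite (A \<union> B)" using finite_sum_nodes finite_subset by blast
  have G_upd: "G (h(x:=i)) = G h" if "valid_hidden h" "i \<in> hidden_range x" for h i
    by (rule depends_onD[OF insert(8) valid_hidden_upd[OF that] that(1)]) (use x(1) in auto)
  have factor: "marginal (A \<union> B) (\<lambda>h. F (h(x := i)) * G (h(x := i)))
      = marginal A (\<lambda>h. F (h(x := i))) * marginal B G" if i: "i \<in> hidden_range x" for i
  proof -
    have "depends_on (\<lambda>h. F (h(x := i))) A"
    proof (rule depends_onI)
      fix h h' assume h: "valid_hidden h" "valid_hidden h'" and eq: "\<And>s. s \<in> A \<Longrightarrow> h s = h' s"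
      show "F (h(x := i)) = F (h'(x := i))"
        by (rule depends_onD[OF insert(7) valid_hidden_upd[OF h(1) i] valid_hidden_upd[OF h(2) i]])
          (use eq in auto)
    qed
    then have "marginal (A \<union> B) (\<lambda>h. F (h(x := i)) * G h)
        = marginal A (\<lambda>h. F (h(x := i))) * marginal B G"
      using insert.IH insert(4-6,8) by blast
    moreover have "marginal (A \<union> B) (\<lambda>h. F (h(x := i)) * G (h(x := i)))
        = marginal (A \<union> B) (\<lambda>h. F (h(x := i)) * G h)"
      by (rule marginal_cong[OF AB]) (simp add: G_upd[OF _ i])
    ultimately show ?thesis by simp
  qed
  have "marginal (insert x A \<union> B) (\<lambda>h. F h * G h)
     = (\<Sum>i\<in>hidden_range x. hidden_cpd S x i * marginal (A \<union> B) (\<lambda>h. F (h(x := i)) * G (h(x:=i))))"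
    using marginal_insert[OF x(2) finite_AB] by simp
  also have "\<dots> = (\<Sum>i\<in>hidden_range x. hidden_cpd S x i * (marginal A (\<lambda>h. F (h(x := i))) * marginal B G))"
    by (rule sum.cong) (simp_all add: factor)
  also have "\<dots> = marginal (insert x A) F * marginal B G"
    using marginal_insert[OF insert(2,1), of F] by (simp add: sum_distrib_right mult.assoc)
  finally show ?case .
qed

lemma marginal_const_one: "A \<subseteq> sum_nodes S \<Longrightarrow> marginal A (\<lambda>_. 1) = 1"
  using marginal_superset[of "{}" A "\<lambda>_. 1"] by (simp add: depends_on_def marginal_empty)

lemma sum_marginal: "(\<Sum>x\<in>X. marginal A (F x)) = marginal A (\<lambda>h. \<Sum>x\<in>X. F x h)"
  unfolding marginal_def by (subst sum.swap) (simp add: sum_distrib_left)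

section \<open>Values of nodes as marginals\<close>

definition branch_prob :: "'v \<Rightarrow> (nat \<Rightarrow> bool) \<Rightarrow> ('v \<Rightarrow> nat) \<Rightarrow> real" where
  "branch_prob v x h = (\<Prod>X\<in>scope S v. leaf_prob X h v (x X))"

lemma leaf_prob_depends_on_sum_desc:
  "v \<in> V \<Longrightarrow> X \<in> scope S v \<Longrightarrow> depends_on (\<lambda>h. leaf_prob X h v b) (sum_desc v)"
proof (induction "height v" arbitrary: v rule: less_induct)
  case less
  note v = less.prems(1)
  show ?case
  proof (cases rule: node_kind_cases[OF v])
    case 1
    show ?thesis
    proof (rule depends_onI)
      fix h h' assume h: "valid_hidden h" "valid_hidden h'" and eq: "\<And>s. s \<in> sum_desc v \<Longrightarrow> h s = h' s"
      have "h v = h' v" using eq v 1 by (simp add: sum_desc_def sum_nodes_iff)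
      let ?c = "spn_ch S v ! (h v - 1)"
      have c: "?c \<in> set (spn_ch S v)" using valid_hidden_child[OF h(1) v 1] by blast
      have "X \<in> scope S ?c" using scope_sum_child[OF v 1 c] less.prems(2) by simp
      then have "depends_on (\<lambda>h. leaf_prob X h ?c b) (sum_desc ?c)"
        by (rule less.hyps[OF height_child_less[OF v c] child_in_nodes[OF v c]])
      then have "leaf_prob X h ?c b = leaf_prob X h' ?c b"
        by (rule depends_onD[OF _ h]) (use eq sum_desc_child_subset[OF v c] in blast)
      then show "leaf_prob X h v b = leaf_prob X h' v b"
        using leaf_prob_sum[OF v 1 less.prems(2) h(1)] leaf_prob_sum[OF v 1 less.prems(2) h(2)] \<open>h v = h' v\<close>
        by simp
    qed
  next
    case 2
    note c = prod_child_spec[OF v 2 less.prems(2)]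
    have "depends_on (\<lambda>h. leaf_prob X h (prod_child X v) b) (sum_desc (prod_child X v))"
      by (rule less.hyps[OF height_child_less[OF v c(1)] child_in_nodes[OF v c(1)] c(2)])
    then show ?thesis
      using depends_on_mono[OF _ sum_desc_child_subset[OF v c(1)]] leaf_prob_prod[OF v 2 less.prems(2)]
      by simp
  qed (simp add: leaf_prob_Dist depends_on_def)
qed

lemma leaf_prob_sum_bool:
  "v \<in> V \<Longrightarrow> X \<in> scope S v \<Longrightarrow> valid_hidden h \<Longrightarrow> leaf_prob X h v True + leaf_prob X h v False = 1"
proof (induction "height v" arbitrary: v rule: less_induct)
  case less
  note v = less.prems(1)
  show ?case
  proof (cases rule: node_kind_cases[OF v])
    case 1
    let ?c = "spn_ch S v ! (h v - 1)"
    have c: "?c \<in> set (spn_ch S v)" using valid_hidden_child[OF less.prems(3) v 1] by blast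
    have "X \<in> scope S ?c" using scope_sum_child[OF v 1 c] less.prems(2) by simp
    then have "leaf_prob X h ?c True + leaf_prob X h ?c False = 1"
      by (rule less.hyps[OF height_child_less[OF v c] child_in_nodes[OF v c] _ less.prems(3)])
    then show ?thesis using leaf_prob_sum[OF v 1 less.prems(2,3)] by simp
  next
    case 2
    note c = prod_child_spec[OF v 2 less.prems(2)]
    have "leaf_prob X h (prod_child X v) True + leaf_prob X h (prod_child X v) False = 1"
      by (rule less.hyps[OF height_child_less[OF v c(1)] child_in_nodes[OF v c(1)] c(2) less.prems(3)])
    then show ?thesis using leaf_prob_prod[OF v 2 less.prems(2)] by simp
  qed (simp add: leaf_prob_Dist)
qed

lemma branch_prob_depends_on_sum_desc: "v \<in> V \<Longrightarrow> depends_on (branch_prob v x) (sum_desc v)"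
  unfolding branch_prob_def
  by (intro depends_onI prod.cong refl depends_onD[OF leaf_prob_depends_on_sum_desc]) auto

lemma branch_prob_sum:
  assumes "v \<in> V" "spn_kind S v = SumNode" "valid_hidden h"
  shows "branch_prob v x h = branch_prob (spn_ch S v ! (h v - 1)) x h"
proof -
  let ?c = "spn_ch S v ! (h v - 1)"
  have "?c \<in> set (spn_ch S v)" using valid_hidden_child[OF assms(3,1,2)] by blast
  then have "scope S ?c = scope S v" by (rule scope_sum_child[OF assms(1,2)])
  then show ?thesis unfolding branch_prob_def
    by (intro prod.cong) (simp_all add: leaf_prob_sum[OF assms(1,2) _ assms(3)])
qed

lemma branch_prob_prod:
  assumes "v \<in> V" "spn_kind S v = ProdNode"
  shows "branch_prob v x h = (\<Prod>u\<in>set (spn_ch S v). branch_prob u x h)"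
proof -
  have "branch_prob v x h = (\<Prod>X\<in>(\<Union>u\<in>set (spn_ch S v). scope S u). leaf_prob X h v (x X))"
    unfolding branch_prob_def using scope_inner[OF assms(1)] assms(2) by simp
  also have "\<dots> = (\<Prod>u\<in>set (spn_ch S v). \<Prod>X\<in>scope S u. leaf_prob X h v (x X))"
    using scope_prod_children_disjoint[OF assms] by (intro prod.UNION_disjoint) (auto simp: finite_scope)
  also have "\<dots> = (\<Prod>u\<in>set (spn_ch S v). branch_prob u x h)"
    unfolding branch_prob_def
  proof (intro prod.cong refl)
    fix u X assume u: "u \<in> set (spn_ch S v)" and X: "X \<in> scope S u"
    then have "X \<in> scope S v" using scope_child_subset[OF assms(1)] by blast
    with u X show "leaf_prob X h v (x X) = leaf_prob X h u (x X)"
      using prod_child_spec(3)[OF assms] leaf_prob_prod[OF assms] by metis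
  qed
  finally show ?thesis .
qed

lemma prod_marginal_sum_desc:
  "finite C \<Longrightarrow> C \<subseteq> V \<Longrightarrow> (\<forall>u\<in>C. \<forall>u'\<in>C. u \<noteq> u' \<longrightarrow> sum_desc u \<inter> sum_desc u' = {}) \<Longrightarrow>
   (\<Prod>u\<in>C. marginal (sum_desc u) (branch_prob u x))
   = marginal (\<Union>u\<in>C. sum_desc u) (\<lambda>h. \<Prod>u\<in>C. branch_prob u x h)"
proof (induction C rule: finite_induct)
  case (insert c C)
  have "depends_on (\<lambda>h. \<Prod>u\<in>C. branch_prob u x h) (\<Union>u\<in>C. sum_desc u)"
  proof (rule depends_onI)
    fix h h' assume h: "valid_hidden h" "valid_hidden h'"
      and eq: "\<And>s. s \<in> (\<Union>u\<in>C. sum_desc u) \<Longrightarrow> h s = h' s"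
    show "(\<Prod>u\<in>C. branch_prob u x h) = (\<Prod>u\<in>C. branch_prob u x h')"
    proof (rule prod.cong[OF refl])
      fix u assume u: "u \<in> C"
      show "branch_prob u x h = branch_prob u x h'"
        by (rule depends_onD[OF branch_prob_depends_on_sum_desc h]) (use insert.prems u eq in blast)+
    qed
  qed
  moreover have "sum_desc c \<inter> sum_desc u = {}" if "u \<in> C" for u
    using insert.prems(2) insert.hyps(2) that by (metis insertCI)
  then have "sum_desc c \<inter> (\<Union>u\<in>C. sum_desc u) = {}" by blast
  ultimately have "marginal (sum_desc c) (branch_prob c x) * marginal (\<Union>u\<in>C. sum_desc u) (\<lambda>h. \<Prod>u\<in>C. branch_prob u x h)
      = marginal (sum_desc c \<union> (\<Union>u\<in>C. sum_desc u)) (\<lambda>h. branch_prob c x h * (\<Prod>u\<in>C. branch_prob u x h))"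
    using insert.prems(1) sum_desc_subset
    by (intro marginal_mult[symmetric] finite_sum_desc branch_prob_depends_on_sum_desc) blast+
  then show ?case using insert by simp
qed (simp add: marginal_empty)

lemma val_eq_marginal: "v \<in> V \<Longrightarrow> val S x v = marginal (sum_desc v) (branch_prob v x)"
proof (induction "height v" arbitrary: v rule: less_induct)
  case less
  note v = less.prems(1)
  have IH: "val S x u = marginal (sum_desc u) (branch_prob u x)" if u: "u \<in> set (spn_ch S v)" for u
    by (rule less.hyps[OF height_child_less[OF v u] child_in_nodes[OF v u]])
  show ?case
  proof (cases rule: node_kind_cases[OF v])
    case 1
    let ?cs = "spn_ch S v"
    let ?D = "\<Union>u\<in>set ?cs. sum_desc u"
    have D: "?D \<subseteq> sum_nodes S" using sum_desc_subset by blast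
    have "val S x v = sum_list (map (\<lambda>u. spn_w S v u * val S x u) ?cs)"
      using val_eq[OF v] 1 by simp
    also have "\<dots> = (\<Sum>i\<in>hidden_range v. spn_w S v (?cs ! (i - 1)) * val S x (?cs ! (i - 1)))"
      by (rule sum_atLeast1_nth_eq_sum_list[symmetric])
    also have "\<dots> = (\<Sum>i\<in>hidden_range v. hidden_cpd S v i * marginal ?D (\<lambda>h. branch_prob v x (h(v := i))))"
    proof (rule sum.cong[OF refl])
      fix i assume i: "i \<in> hidden_range v"
      let ?c = "?cs ! (i - 1)"
      have c: "?c \<in> set ?cs" using i by auto
      note dep = branch_prob_depends_on_sum_desc[OF child_in_nodes[OF v c]]
      have "val S x ?c = marginal ?D (branch_prob ?c x)"
        unfolding IH[OF c] by (rule marginal_superset[symmetric, OF _ D dep]) (use c in blast)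
      also have "\<dots> = marginal ?D (\<lambda>h. branch_prob v x (h(v := i)))"
      proof (rule marginal_cong[OF D])
        fix h assume h: "valid_hidden h"
        have "branch_prob v x (h(v := i)) = branch_prob ?c x (h(v := i))"
          using branch_prob_sum[OF v 1 valid_hidden_upd[OF h i]] by simp
        also have "\<dots> = branch_prob ?c x h"
          by (rule depends_onD[OF dep valid_hidden_upd[OF h i] h]) (use notin_sum_desc_child[OF v c] in auto)
        finally show "branch_prob ?c x h = branch_prob v x (h(v := i))" by simp
      qed
      finally show "spn_w S v ?c * val S x ?c = hidden_cpd S v i * marginal ?D (\<lambda>h. branch_prob v x (h(v := i)))"
        by (simp add: hidden_cpd_def)
    qed
    also have "\<dots> = marginal (insert v ?D) (branch_prob v x)"
    proof (rule marginal_insert[symmetric])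
      show "v \<notin> ?D" using notin_sum_desc_child[OF v] by blast
    qed (simp add: finite_sum_desc)
    finally show ?thesis using sum_desc_sum[OF v 1] by simp
  next
    case 2
    have "val S x v = (\<Prod>u\<in>set (spn_ch S v). val S x u)"
      using val_eq[OF v] 2 by (simp add: prod.distinct_set_conv_list distinct_children[OF v])
    also have "\<dots> = (\<Prod>u\<in>set (spn_ch S v). marginal (sum_desc u) (branch_prob u x))"
      using IH by simp
    also have "\<dots> = marginal (sum_desc v) (\<lambda>h. \<Prod>u\<in>set (spn_ch S v). branch_prob u x h)"
      unfolding sum_desc_prod[OF v 2]
      by (rule prod_marginal_sum_desc) (use child_in_nodes[OF v] sum_desc_prod_children_disjoint[OF v 2] in blast)+
    also have "\<dots> = marginal (sum_desc v) (branch_prob v x)"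
      by (rule marginal_cong[OF sum_desc_subset]) (simp add: branch_prob_prod[OF v 2])
    finally show ?thesis .
  qed (simp add: sum_desc_Dist[OF v] marginal_empty branch_prob_def scope_Dist[OF v] leaf_prob_Dist val_eq[OF v])
qed

lemma leaf_prob_default_ext: "leaf_prob X (default_ext (sum_nodes S) h) v b = leaf_prob X h v b"
proof -
  have "restrict (default_ext (sum_nodes S) h) (parents S X) = restrict h (parents S X)"
    by (auto simp: restrict_def default_ext_def parents_def)
  then show ?thesis by (simp add: leaf_prob_def add_leaf_def)
qed

lemma f_spn_eq_marginal: "f_spn S x = marginal (sum_nodes S) (branch_prob (spn_root S) x)"
  using val_eq_marginal[OF root_in_nodes] by (simp add: f_spn_def sum_desc_root)

lemma Pr_bn_eq_f_spn:
  assumes "spn_over N S"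
  shows "Pr_bn N S x = f_spn S x"
proof -
  have "Pr_bn N S x = (\<Sum>h\<in>hidden_assignments S. (\<Prod>s\<in>sum_nodes S. hidden_cpd S s (h s)) *
      (\<Prod>X\<in>{1..N}. leaf_prob X h (spn_root S) (x X)))"
    unfolding Pr_bn_def Pr_bn_joint_def add_cpd_add_of ..
  also have "\<dots> = marginal (sum_nodes S) (branch_prob (spn_root S) x)"
    using assms unfolding marginal_def branch_prob_def hidden_assignments_def spn_over_def leaf_prob_default_ext
    by simp
  finally show ?thesis by (simp add: f_spn_eq_marginal)
qed

lemma sum_f_spn_assignments:
  assumes "spn_over N S"
  shows "(\<Sum>x\<in>assignments N. f_spn S x) = 1"
proof -
  have scope_root: "scope S (spn_root S) = {1..N}" using assms by (simp add: spn_over_def)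
  have "(\<Sum>x\<in>assignments N. branch_prob (spn_root S) x h) = 1" if h: "valid_hidden h" for h
  proof -
    have "(\<Sum>x\<in>assignments N. branch_prob (spn_root S) x h)
        = (\<Prod>X\<in>{1..N}. \<Sum>b\<in>UNIV. leaf_prob X h (spn_root S) b)"
      unfolding assignments_def branch_prob_def scope_root by (rule prod_sum_PiE[symmetric]) auto
    also have "\<dots> = (\<Prod>X\<in>{1..N}. 1)"
    proof (rule prod.cong[OF refl])
      fix X assume "X \<in> {1..N}"
      then have "leaf_prob X h (spn_root S) True + leaf_prob X h (spn_root S) False = 1"
        using leaf_prob_sum_bool[OF root_in_nodes _ h] scope_root by simp
      then show "(\<Sum>b\<in>UNIV. leaf_prob X h (spn_root S) b) = 1" by (simp add: UNIV_bool add.commute)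
    qed
    finally show ?thesis by simp
  qed
  then have "marginal (sum_nodes S) (\<lambda>h. \<Sum>x\<in>assignments N. branch_prob (spn_root S) x h)
      = marginal (sum_nodes S) (\<lambda>_. 1)"
    by (intro marginal_cong) simp_all
  then show ?thesis
    by (simp add: f_spn_eq_marginal sum_marginal marginal_const_one)
qed

end

theorem theorem4:
  fixes S :: "'v spn" and N :: nat
  assumes "spn_wf S" and "normal S" and "spn_over N S"
  shows "\<forall>x\<in>assignments N. Pr_spn N S x = Pr_bn N S x"
proof
  fix x
  interpret normal_spn S using assms(1,2) by unfold_locales
  show "Pr_spn N S x = Pr_bn N S x"
    unfolding Pr_spn_def sum_f_spn_assignments[OF assms(3)] Pr_bn_eq_f_spn[OF assms(3)] by simp
qed

end
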